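(* Let $e[r]$ be an affine function of $r$ with $e[1]>0$ and $e[-1]>0$. The set $U$ is convex and its closure splits as $\overline U=K_-'\cup\overline U_0\cup K_+'$. In particular $K\subset\overline U$.
   Context: Let $n\ge2$, $\mathcal S_0^{n\times n}$ the trace-free symmetric matrices, $Z:=\mathbb{R}\times\mathbb{R}^n\times\mathbb{R}^n\times\mathcal S_0^{n\times n}\times\mathbb{R}$ with elements $z=(\rho,v,m,\sigma,p)$. $K:=\{z:\rho\in\{\pm1\},m=\rho v,v\otimes v-\sigma=e[\rho]\mathrm{Id}\}$. For $\rho\in(-1,1)$: $M(z)=\frac{v\otimes v-\rho(m\otimes v+v\otimes m)+m\otimes m}{1-\rho^2}-\sigma$, $Q(z)=\lambda_{\max}(M(z))$, $T_\pm(z)=\frac{|m\pm v|^2}{n(\rho\pm1)^2}$. $U:=\{z:\rho\in(-1,1),T_\pm(z)<e[\pm1],Q(z)<e[\rho]\}$, $\overline U_0:=\{z:\rho\in(-1,1),T_\pm(z)\le e[\pm1],Q(z)\le e[\rho]\}$, $K_\pm':=\{z:\rho=\pm1,m=\pm v,\lambda_{\max}(v\otimes v-\sigma)\le e[\pm1]\}$. *)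

theory Defs
  imports "HOL-Analysis.Analysis"
begin

type_synonym ('n) zpt = "real \<times> (real^'n) \<times> (real^'n) \<times> (real^'n^'n) \<times> real"

definition outer :: "real^('n::finite) \<Rightarrow> real^'n \<Rightarrow> real^'n^'n" where
  "outer u w = (\<chi> i j. u$i * w$j)"

definition sym_tracefree :: "real^('n::finite)^'n \<Rightarrow> bool" where
  "sym_tracefree A \<longleftrightarrow> transpose A = A \<and> (\<Sum>i\<in>UNIV. A$i$i) = 0"

definition Zset :: "('n::finite) zpt set" where
  "Zset = {(\<rho>, v, m, \<sigma>, p). sym_tracefree \<sigma>}"

definition lambda_max :: "real^('n::finite)^'n \<Rightarrow> real" where
  "lambda_max A = Max {c. \<exists>x. x \<noteq> 0 \<and> A *v x = c *\<^sub>R x}"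

definition Mz :: "('n::finite) zpt \<Rightarrow> real^'n^'n" where
  "Mz z = (case z of (\<rho>, v, m, \<sigma>, p) \<Rightarrow>
     (1 / (1 - \<rho>^2)) *\<^sub>R (outer v v - \<rho> *\<^sub>R (outer m v + outer v m) + outer m m) - \<sigma>)"

definition Qz :: "('n::finite) zpt \<Rightarrow> real" where
  "Qz z = lambda_max (Mz z)"

definition Tplus :: "('n::finite) zpt \<Rightarrow> real" where
  "Tplus z = (case z of (\<rho>, v, m, \<sigma>, p) \<Rightarrow>
     (norm (m + v))^2 / (real CARD('n) * (\<rho> + 1)^2))"

definition Tminus :: "('n::finite) zpt \<Rightarrow> real" where
  "Tminus z = (case z of (\<rho>, v, m, \<sigma>, p) \<Rightarrow>
     (norm (m - v))^2 / (real CARD('n) * (\<rho> - 1)^2))"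

definition Kset :: "(real \<Rightarrow> real) \<Rightarrow> ('n::finite) zpt set" where
  "Kset e = {z \<in> Zset. case z of (\<rho>, v, m, \<sigma>, p) \<Rightarrow>
     (\<rho> = 1 \<or> \<rho> = -1) \<and> m = \<rho> *\<^sub>R v \<and> outer v v - \<sigma> = e \<rho> *\<^sub>R mat 1}"

definition Uset :: "(real \<Rightarrow> real) \<Rightarrow> ('n::finite) zpt set" where
  "Uset e = {z \<in> Zset. case z of (\<rho>, v, m, \<sigma>, p) \<Rightarrow>
     -1 < \<rho> \<and> \<rho> < 1 \<and> Tplus z < e 1 \<and> Tminus z < e (-1) \<and> Qz z < e \<rho>}"

definition U0bar :: "(real \<Rightarrow> real) \<Rightarrow> ('n::finite) zpt set" where
  "U0bar e = {z \<in> Zset. case z of (\<rho>, v, m, \<sigma>, p) \<Rightarrow>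
     -1 < \<rho> \<and> \<rho> < 1 \<and> Tplus z \<le> e 1 \<and> Tminus z \<le> e (-1) \<and> Qz z \<le> e \<rho>}"

definition Kplus' :: "(real \<Rightarrow> real) \<Rightarrow> ('n::finite) zpt set" where
  "Kplus' e = {z \<in> Zset. case z of (\<rho>, v, m, \<sigma>, p) \<Rightarrow>
     \<rho> = 1 \<and> m = v \<and> lambda_max (outer v v - \<sigma>) \<le> e 1}"

definition Kminus' :: "(real \<Rightarrow> real) \<Rightarrow> ('n::finite) zpt set" where
  "Kminus' e = {z \<in> Zset. case z of (\<rho>, v, m, \<sigma>, p) \<Rightarrow>
     \<rho> = -1 \<and> m = - v \<and> lambda_max (outer v v - \<sigma>) \<le> e (-1)}"

end

theory Submission
  imports Defs
begin

(* Write a = x \<bullet> v and b = x \<bullet> m. For -1 < \<rho> < 1 the quadratic form of M(z) is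
   x \<mapsto> (a + b)\<^sup>2 / (2 (1 + \<rho>)) + (a - b)\<^sup>2 / (2 (1 - \<rho>)) - x \<bullet> \<sigma> x,
   a sum of perspectives s\<^sup>2 / r of the square, hence jointly convex in (\<rho>, v, m, \<sigma>) for every
   fixed x. The top eigenvalue of a symmetric matrix is the attained maximum of its Rayleigh quotient,
   so Q(z) < e[\<rho>] says that this form stays below e[\<rho>] |x|\<^sup>2 for all x \<noteq> 0, and T\<^sub>\<plusminus> < e[\<plusminus>1] reads
   |m \<plusminus> v| < sqrt (n e[\<plusminus>1]) (1 \<plusminus> \<rho>). As e is affine, every condition defining U is a strict
   sublevel condition of a convex function; so mixing a point of U with positive weight and a point
   satisfying the non-strict conditions lands in U again.

   The non-strict conditions with cleared denominators cut out a closed set containing U. Where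
   \<rho> = \<plusminus>1 they force m = \<plusminus>v and \<lambda>\<^sub>m\<^sub>a\<^sub>x(v \<otimes> v - \<sigma>) \<le> e[\<plusminus>1], so this set is K\<^sub>-' \<union> U0bar \<union> K\<^sub>+';
   conversely, points of K\<^sub>\<plusminus>' satisfy them (tracing, with tr \<sigma> = 0, gives |v|\<^sup>2 \<le> n e[\<plusminus>1]) and are
   limits of their mixtures with the origin, which lies in U. *)

lemma transpose_add: "transpose (A + B) = transpose A + transpose (B :: 'a::semiring_1^'n^'m)"
  by (simp add: transpose_def vec_eq_iff)

lemma transpose_diff: "transpose (A - B) = transpose A - transpose (B :: 'a::ring_1^'n^'m)"
  by (simp add: transpose_def vec_eq_iff)

lemma continuous_on_transpose [continuous_intros]:
  fixes f :: "'a::topological_space \<Rightarrow> real^'n::finite^'m::finite"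
  shows "continuous_on S f \<Longrightarrow> continuous_on S (\<lambda>z. transpose (f z))"
  unfolding transpose_def by (intro continuous_intros)

lemma continuous_on_matrix_vector_mult_left [continuous_intros]:
  fixes f :: "'a::topological_space \<Rightarrow> real^'n::finite^'m::finite"
  shows "continuous_on S f \<Longrightarrow> continuous_on S (\<lambda>z. f z *v x)"
  unfolding matrix_vector_mult_def by (intro continuous_intros)

lemma outer_matrix_vector_mult: "outer u w *v x = (w \<bullet> x) *\<^sub>R u"
  by (simp add: vec_eq_iff matrix_vector_mult_def outer_def inner_vec_def sum_distrib_left mult_ac)

lemma inner_outer_matrix_vector_mult: "x \<bullet> (outer u w *v x) = (x \<bullet> u) * (x \<bullet> w)"
  by (simp add: outer_matrix_vector_mult inner_commute)

lemma transpose_outer: "transpose (outer u w) = outer w u"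
  by (simp add: transpose_def outer_def vec_eq_iff mult.commute)

lemma symmetric_outer_minus:
  "transpose \<sigma> = \<sigma> \<Longrightarrow> transpose (outer v v - \<sigma>) = outer v v - \<sigma>"
  by (simp add: transpose_diff transpose_outer)

lemma sym_tracefree_transpose: "sym_tracefree \<sigma> \<Longrightarrow> transpose \<sigma> = \<sigma>"
  by (simp add: sym_tracefree_def)

lemma sym_tracefree_combination:
  "sym_tracefree A \<Longrightarrow> sym_tracefree B \<Longrightarrow> sym_tracefree (a *\<^sub>R A + b *\<^sub>R B)"
  by (simp add: sym_tracefree_def transpose_add transpose_scalar sum.distrib flip: sum_distrib_left)

section \<open>Largest eigenvalue of a symmetric matrix\<close>

lemma symmetric_inner_matrix_vector_mult:
  fixes A :: "real^'n::finite^'n"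
  assumes "transpose A = A"
  shows "x \<bullet> (A *v y) = (A *v x) \<bullet> y"
  by (metis assms dot_lmul_matrix inner_commute transpose_matrix_vector)

lemma finite_eigenvalues_symmetric:
  fixes A :: "real^'n::finite^'n"
  assumes "transpose A = A"
  shows "finite {c. \<exists>x. x \<noteq> 0 \<and> A *v x = c *\<^sub>R x}" (is "finite ?S")
proof -
  define f where "f c = (SOME x. x \<noteq> 0 \<and> A *v x = c *\<^sub>R x)" for c
  have f: "f c \<noteq> 0" "A *v f c = c *\<^sub>R f c" if "c \<in> ?S" for c
    using someI_ex[OF that[unfolded mem_Collect_eq]] by (simp_all add: f_def)
  have inj: "inj_on f ?S"
  proof (rule inj_onI)
    fix c d assume c: "c \<in> ?S" and d: "d \<in> ?S" and "f c = f d"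
    then have "c *\<^sub>R f c = d *\<^sub>R f c" using f(2)[OF c] f(2)[OF d] by metis
    then show "c = d" using f(1)[OF c] by simp
  qed
  have "pairwise orthogonal (f ` ?S)"
  proof (rule pairwise_imageI)
    fix c d assume c: "c \<in> ?S" and d: "d \<in> ?S" and "f c \<noteq> f d"
    then have "c \<noteq> d" by blast
    have "c * (f c \<bullet> f d) = (A *v f c) \<bullet> f d" using f(2)[OF c] by simp
    also have "\<dots> = f c \<bullet> (A *v f d)" by (rule symmetric_inner_matrix_vector_mult[OF assms, symmetric])
    also have "\<dots> = d * (f c \<bullet> f d)" using f(2)[OF d] by simp
    finally have "(c - d) * (f c \<bullet> f d) = 0" by (simp add: algebra_simps)
    with \<open>c \<noteq> d\<close> show "orthogonal (f c) (f d)" by (simp add: orthogonal_def)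
  qed
  moreover have "0 \<notin> f ` ?S" using f(1) by fastforce
  ultimately have "independent (f ` ?S)" by (rule pairwise_orthogonal_independent)
  then have "finite (f ` ?S)" using independent_bound by blast
  then show ?thesis using inj by (rule finite_imageD)
qed

lemma quadratic_nonneg_imp_linear_coeff_zero:
  fixes a b :: real
  assumes "\<And>t. 0 \<le> 2 * t * a + t\<^sup>2 * b"
  shows "a = 0"
proof -
  have "0 \<le> b" using assms[of 1] assms[of "-1"] by simp
  define t where "t = - a / (b + 1)"
  have t: "t * (b + 1) = - a" using \<open>0 \<le> b\<close> by (simp add: t_def)
  have "0 \<le> (2 * t * a + t\<^sup>2 * b) * (b + 1)\<^sup>2" using assms by simp
  also have "\<dots> = 2 * a * (t * (b + 1)) * (b + 1) + (t * (b + 1))\<^sup>2 * b"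
    by (simp add: power2_eq_square algebra_simps)
  also have "\<dots> = - a\<^sup>2 * (b + 2)"
    unfolding t by (simp add: power2_eq_square algebra_simps)
  finally have "a\<^sup>2 * (b + 2) \<le> 0" by simp
  then have "a\<^sup>2 \<le> 0" using \<open>0 \<le> b\<close> by (simp add: mult_le_0_iff)
  then show "a = 0" by simp
qed

lemma psd_quadratic_form_zero_imp_kernel:
  fixes B :: "real^'n::finite^'n"
  assumes "transpose B = B" and psd: "\<And>y. 0 \<le> y \<bullet> (B *v y)" and "x \<bullet> (B *v x) = 0"
  shows "B *v x = 0"
proof -
  let ?w = "B *v x"
  have "(x + t *\<^sub>R ?w) \<bullet> (B *v (x + t *\<^sub>R ?w)) = 2 * t * (?w \<bullet> ?w) + t\<^sup>2 * (?w \<bullet> (B *v ?w))" for t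
    using assms(3) symmetric_inner_matrix_vector_mult[OF assms(1), of x ?w]
    by (simp add: algebra_simps inner_add_left inner_add_right inner_commute power2_eq_square)
  then have "?w \<bullet> ?w = 0"
    using psd by (intro quadratic_nonneg_imp_linear_coeff_zero[where b = "?w \<bullet> (B *v ?w)"]) metis
  then show ?thesis by simp
qed

lemma symmetric_top_eigenpair:
  fixes A :: "real^'n::finite^'n"
  assumes A_sym: "transpose A = A"
  obtains c x where "x \<noteq> 0" "A *v x = c *\<^sub>R x" "\<And>y. y \<bullet> (A *v y) \<le> c * (y \<bullet> y)"
proof -
  have "\<exists>x\<in>sphere 0 1. \<forall>y\<in>sphere 0 1. y \<bullet> (A *v y) \<le> x \<bullet> (A *v x)"
    by (intro continuous_attains_sup) (auto intro!: continuous_intros)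
  then obtain x where x: "norm x = 1" and max: "\<And>y. norm y = 1 \<Longrightarrow> y \<bullet> (A *v y) \<le> x \<bullet> (A *v x)"
    by auto
  define c where "c = x \<bullet> (A *v x)"
  have bound: "y \<bullet> (A *v y) \<le> c * (y \<bullet> y)" for y
  proof (cases "y = 0")
    case False
    define u where "u = y /\<^sub>R norm y"
    have "y = norm y *\<^sub>R u" using False by (simp add: u_def)
    then have "y \<bullet> (A *v y) = (norm y)\<^sup>2 * (u \<bullet> (A *v u))"
      by (metis inner_scaleR_left inner_scaleR_right matrix_vector_mult_scaleR mult.assoc power2_eq_square)
    also have "\<dots> \<le> (norm y)\<^sup>2 * c"
      using max[of u] False by (simp add: u_def c_def)
    finally show ?thesis by (simp add: power2_norm_eq_inner mult.commute)
  qed simp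
  \<comment> \<open>c Id - A is positive semidefinite and its form vanishes at the maximiser x.\<close>
  define B where "B = c *\<^sub>R mat 1 - A"
  have "B *v x = 0"
  proof (rule psd_quadratic_form_zero_imp_kernel)
    show "transpose B = B" using A_sym by (simp add: B_def transpose_diff transpose_scalar)
    show "0 \<le> y \<bullet> (B *v y)" for y
      using bound[of y] by (simp add: B_def matrix_vector_mult_diff_rdistrib inner_diff_right
          flip: scaleR_matrix_vector_assoc)
    show "x \<bullet> (B *v x) = 0"
      using x by (simp add: B_def c_def matrix_vector_mult_diff_rdistrib inner_diff_right
          dot_square_norm flip: scaleR_matrix_vector_assoc)
  qed
  then have "A *v x = c *\<^sub>R x"
    by (simp add: B_def matrix_vector_mult_diff_rdistrib flip: scaleR_matrix_vector_assoc)
  with x bound show thesis by (intro that) auto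
qed

lemma lambda_max_symmetric:
  fixes A :: "real^'n::finite^'n"
  assumes "transpose A = A"
  shows lambda_max_eigenvector: "\<exists>x. x \<noteq> 0 \<and> A *v x = lambda_max A *\<^sub>R x"
    and lambda_max_upper_bound: "y \<bullet> (A *v y) \<le> lambda_max A * (y \<bullet> y)"
proof -
  obtain c x where x: "x \<noteq> 0" "A *v x = c *\<^sub>R x" and bound: "\<And>y. y \<bullet> (A *v y) \<le> c * (y \<bullet> y)"
    using symmetric_top_eigenpair[OF assms] by blast
  have "lambda_max A = c"
    unfolding lambda_max_def
  proof (rule Max_eqI[OF finite_eigenvalues_symmetric[OF assms]])
    show "c \<in> {c. \<exists>x. x \<noteq> 0 \<and> A *v x = c *\<^sub>R x}" using x by blast
  next
    fix d assume "d \<in> {c. \<exists>x. x \<noteq> 0 \<and> A *v x = c *\<^sub>R x}"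
    then obtain z where "z \<noteq> 0" "A *v z = d *\<^sub>R z" by blast
    then show "d \<le> c" using bound[of z] by simp
  qed
  then show "\<exists>x. x \<noteq> 0 \<and> A *v x = lambda_max A *\<^sub>R x" and "y \<bullet> (A *v y) \<le> lambda_max A * (y \<bullet> y)"
    using x bound by auto
qed

lemma lambda_max_le_iff:
  fixes A :: "real^'n::finite^'n"
  assumes "transpose A = A"
  shows "lambda_max A \<le> c \<longleftrightarrow> (\<forall>y. y \<bullet> (A *v y) \<le> c * (y \<bullet> y))"
proof
  assume "lambda_max A \<le> c"
  then show "\<forall>y. y \<bullet> (A *v y) \<le> c * (y \<bullet> y)"
    using lambda_max_upper_bound[OF assms] by (meson inner_ge_zero mult_right_mono order_trans)
next
  assume "\<forall>y. y \<bullet> (A *v y) \<le> c * (y \<bullet> y)"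
  moreover obtain x where "x \<noteq> 0" "A *v x = lambda_max A *\<^sub>R x"
    using lambda_max_eigenvector[OF assms] by blast
  ultimately show "lambda_max A \<le> c" by (metis inner_scaleR_right inner_gt_zero_iff mult_le_cancel_right_pos)
qed

lemma lambda_max_less_iff:
  fixes A :: "real^'n::finite^'n"
  assumes "transpose A = A"
  shows "lambda_max A < c \<longleftrightarrow> (\<forall>y. y \<noteq> 0 \<longrightarrow> y \<bullet> (A *v y) < c * (y \<bullet> y))"
proof
  assume "lambda_max A < c"
  then show "\<forall>y. y \<noteq> 0 \<longrightarrow> y \<bullet> (A *v y) < c * (y \<bullet> y)"
    using lambda_max_upper_bound[OF assms] by (meson inner_gt_zero_iff mult_strict_right_mono order_le_less_trans)
next
  assume "\<forall>y. y \<noteq> 0 \<longrightarrow> y \<bullet> (A *v y) < c * (y \<bullet> y)"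
  moreover obtain x where "x \<noteq> 0" "A *v x = lambda_max A *\<^sub>R x"
    using lambda_max_eigenvector[OF assms] by blast
  ultimately show "lambda_max A < c" by (metis inner_scaleR_right inner_gt_zero_iff mult_less_cancel_right_pos)
qed

lemma lambda_max_outer_minus_le_iff:
  assumes "transpose \<sigma> = \<sigma>"
  shows "lambda_max (outer v v - \<sigma>) \<le> c \<longleftrightarrow> (\<forall>x. (x \<bullet> v)\<^sup>2 - x \<bullet> (\<sigma> *v x) \<le> c * (x \<bullet> x))"
  by (simp add: lambda_max_le_iff[OF symmetric_outer_minus[OF assms]] matrix_vector_mult_diff_rdistrib
      inner_diff_right inner_outer_matrix_vector_mult power2_eq_square)

lemma norm_power2_le_by_trace:
  fixes v :: "real^'n::finite" and c :: real
  assumes "sym_tracefree \<sigma>" and bound: "\<And>x. (x \<bullet> v)\<^sup>2 - x \<bullet> (\<sigma> *v x) \<le> c * (x \<bullet> x)"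
  shows "(norm v)\<^sup>2 \<le> CARD('n) * c"
proof -
  have "(v $ i)\<^sup>2 - \<sigma> $ i $ i \<le> c" for i
    using bound[of "axis i 1"]
    by (simp add: inner_axis' inner_axis_axis matrix_vector_mult_basis column_def)
  then have "(\<Sum>i\<in>UNIV. (v $ i)\<^sup>2 - \<sigma> $ i $ i) \<le> CARD('n) * c"
    by (simp add: sum_bounded_above)
  moreover have "(\<Sum>i\<in>UNIV. \<sigma> $ i $ i) = 0" using assms(1) by (simp add: sym_tracefree_def)
  ultimately show ?thesis by (simp add: norm_vec_def L2_set_def sum_subtractf sum_nonneg)
qed

lemma convex_combination_le_less:
  fixes a1 a2 b1 b2 t :: real
  assumes "a1 \<le> b1" "a2 < b2" "0 < t" "t \<le> 1"
  shows "(1 - t) * a1 + t * a2 < (1 - t) * b1 + t * b2"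
  using mult_left_mono[OF assms(1), of "1 - t"] mult_strict_left_mono[OF assms(2,3)] assms(4)
  by linarith

lemma norm_convex_combination_less:
  fixes a1 a2 :: "'a::real_normed_vector"
  assumes "norm a1 \<le> b1" "norm a2 < b2" "0 < t" "t \<le> 1"
  shows "norm ((1 - t) *\<^sub>R a1 + t *\<^sub>R a2) < (1 - t) * b1 + t * b2"
proof -
  have "norm ((1 - t) *\<^sub>R a1 + t *\<^sub>R a2) \<le> (1 - t) * norm a1 + t * norm a2"
    using norm_triangle_ineq[of "(1 - t) *\<^sub>R a1" "t *\<^sub>R a2"] assms(3,4) by simp
  also have "\<dots> < (1 - t) * b1 + t * b2" using convex_combination_le_less assms by blast
  finally show ?thesis .
qed

(* The perspective of the square is jointly convex; the case r1 = 0 relies on s1\<^sup>2 / 0 = 0. *)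
lemma square_div_convex:
  fixes r1 r2 s1 s2 u w :: real
  assumes "0 \<le> r1" "0 < r2" "r1 = 0 \<Longrightarrow> s1 = 0" "0 \<le> u" "0 \<le> w"
  shows "(u * s1 + w * s2)\<^sup>2 / (u * r1 + w * r2) \<le> u * s1\<^sup>2 / r1 + w * s2\<^sup>2 / r2"
proof (cases "r1 = 0")
  case True
  then show ?thesis using assms by (cases "w = 0") (simp_all add: power2_eq_square mult_ac)
next
  case False
  then have "0 < r1" using assms(1) by simp
  show ?thesis
  proof (cases "u * r1 + w * r2 = 0")
    case False
    then have D: "0 < u * r1 + w * r2" using assms by (simp add: add_nonneg_nonneg order_le_neq_trans)
    have "(u * s1\<^sup>2 * r2 + w * s2\<^sup>2 * r1) * (u * r1 + w * r2) - (u * s1 + w * s2)\<^sup>2 * (r1 * r2)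
        = u * w * (s1 * r2 - s2 * r1)\<^sup>2"
      by (simp add: power2_eq_square algebra_simps)
    moreover have "0 \<le> u * w * (s1 * r2 - s2 * r1)\<^sup>2" using assms by simp
    ultimately show ?thesis using D \<open>0 < r1\<close> assms by (simp add: field_simps)
  qed (use assms \<open>0 < r1\<close> in simp)
qed

lemma square_div_le_iff:
  fixes N n d c :: real
  assumes "0 \<le> N" "0 < n" "0 < d" "0 \<le> c"
  shows "N\<^sup>2 / (n * d\<^sup>2) \<le> c \<longleftrightarrow> N \<le> sqrt (n * c) * d"
    and "N\<^sup>2 / (n * d\<^sup>2) < c \<longleftrightarrow> N < sqrt (n * c) * d"
proof -
  have "sqrt (n * c) * d = sqrt (n * c * d\<^sup>2)" using assms by (simp add: real_sqrt_mult)
  moreover have "N = sqrt (N\<^sup>2)" using assms by simp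
  ultimately have "N \<le> sqrt (n * c) * d \<longleftrightarrow> N\<^sup>2 \<le> n * c * d\<^sup>2"
    and "N < sqrt (n * c) * d \<longleftrightarrow> N\<^sup>2 < n * c * d\<^sup>2"
    by (metis real_sqrt_le_iff, metis real_sqrt_less_iff)
  then show "N\<^sup>2 / (n * d\<^sup>2) \<le> c \<longleftrightarrow> N \<le> sqrt (n * c) * d"
    and "N\<^sup>2 / (n * d\<^sup>2) < c \<longleftrightarrow> N < sqrt (n * c) * d"
    using assms by (simp_all add: pos_divide_le_eq pos_divide_less_eq mult_ac)
qed

section \<open>The quadratic form of M\<close>

(* Division by zero yields 0 at \<rho> = \<plusminus>1; this gives the lower semicontinuous extension on the
   lines b = \<plusminus>a, see Mquad_one. *)
definition Mquad :: "real \<Rightarrow> real \<Rightarrow> real \<Rightarrow> real" where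
  "Mquad \<rho> a b = (a + b)\<^sup>2 / (2 * (1 + \<rho>)) + (a - b)\<^sup>2 / (2 * (1 - \<rho>))"

lemma Mquad_eq:
  assumes "-1 < \<rho>" "\<rho> < 1"
  shows "Mquad \<rho> a b = (a\<^sup>2 - 2 * \<rho> * a * b + b\<^sup>2) / (1 - \<rho>\<^sup>2)"
  using assms unfolding Mquad_def
  by (simp add: field_split_simps power2_eq_square)

lemma Mquad_le_iff:
  assumes "-1 < \<rho>" "\<rho> < 1"
  shows "Mquad \<rho> a b - s \<le> c \<longleftrightarrow>
    a\<^sup>2 - 2 * \<rho> * a * b + b\<^sup>2 - (1 - \<rho>\<^sup>2) * s \<le> (1 - \<rho>\<^sup>2) * c"
proof -
  have "0 < 1 - \<rho>\<^sup>2" using assms by (simp add: abs_less_iff power2_less_1_iff)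
  then show ?thesis unfolding Mquad_eq[OF assms] by (simp add: field_simps)
qed

lemma Mquad_ge:
  assumes "-1 < \<rho>" "\<rho> < 1"
  shows "b\<^sup>2 \<le> Mquad \<rho> a b"
proof -
  have "0 < 1 - \<rho>\<^sup>2" using assms by (simp add: abs_less_iff power2_less_1_iff)
  moreover have "a\<^sup>2 - 2 * \<rho> * a * b + b\<^sup>2 = (a - \<rho> * b)\<^sup>2 + (1 - \<rho>\<^sup>2) * b\<^sup>2"
    by (simp add: power2_eq_square algebra_simps)
  ultimately show ?thesis unfolding Mquad_eq[OF assms] by (simp add: field_simps)
qed

lemma Mquad_one: "Mquad 1 a a = a\<^sup>2"
  and Mquad_minus_one: "Mquad (-1) a (-a) = a\<^sup>2"
  by (simp_all add: Mquad_def power2_eq_square)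

lemma Mquad_convex:
  assumes "-1 \<le> \<rho>1" "\<rho>1 \<le> 1" "\<rho>1 = 1 \<Longrightarrow> b1 = a1" "\<rho>1 = -1 \<Longrightarrow> b1 = -a1"
    and "-1 < \<rho>2" "\<rho>2 < 1" and "0 \<le> t" "t \<le> 1"
  shows "Mquad ((1 - t) * \<rho>1 + t * \<rho>2) ((1 - t) * a1 + t * a2) ((1 - t) * b1 + t * b2)
    \<le> (1 - t) * Mquad \<rho>1 a1 b1 + t * Mquad \<rho>2 a2 b2"
proof -
  let ?\<rho> = "(1 - t) * \<rho>1 + t * \<rho>2" and ?a = "(1 - t) * a1 + t * a2" and ?b = "(1 - t) * b1 + t * b2"
  have "(?a + ?b)\<^sup>2 / (2 * (1 + ?\<rho>)) \<le> (1 - t) * (a1 + b1)\<^sup>2 / (2 * (1 + \<rho>1)) + t * (a2 + b2)\<^sup>2 / (2 * (1 + \<rho>2))"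
    using square_div_convex[of "2 * (1 + \<rho>1)" "2 * (1 + \<rho>2)" "a1 + b1" "1 - t" t "a2 + b2"] assms
    by (fastforce simp: algebra_simps)
  moreover have "(?a - ?b)\<^sup>2 / (2 * (1 - ?\<rho>)) \<le> (1 - t) * (a1 - b1)\<^sup>2 / (2 * (1 - \<rho>1)) + t * (a2 - b2)\<^sup>2 / (2 * (1 - \<rho>2))"
    using square_div_convex[of "2 * (1 - \<rho>1)" "2 * (1 - \<rho>2)" "a1 - b1" "1 - t" t "a2 - b2"] assms
    by (fastforce simp: algebra_simps)
  ultimately show ?thesis by (simp add: Mquad_def algebra_simps)
qed

lemma transpose_Mz: "transpose \<sigma> = \<sigma> \<Longrightarrow> transpose (Mz (\<rho>, v, m, \<sigma>, p)) = Mz (\<rho>, v, m, \<sigma>, p)"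
  by (simp add: Mz_def transpose_add transpose_diff transpose_scalar transpose_outer add.commute)

lemma inner_Mz_matrix_vector_mult:
  assumes "-1 < \<rho>" "\<rho> < 1"
  shows "x \<bullet> (Mz (\<rho>, v, m, \<sigma>, p) *v x) = Mquad \<rho> (x \<bullet> v) (x \<bullet> m) - x \<bullet> (\<sigma> *v x)"
proof -
  let ?X = "outer v v - \<rho> *\<^sub>R (outer m v + outer v m) + outer m m"
  have "x \<bullet> (?X *v x) = (x \<bullet> v)\<^sup>2 - 2 * \<rho> * (x \<bullet> v) * (x \<bullet> m) + (x \<bullet> m)\<^sup>2"
    by (simp add: matrix_vector_mult_diff_rdistrib matrix_vector_mult_add_rdistrib inner_diff_right
        inner_add_right inner_outer_matrix_vector_mult power2_eq_square algebra_simps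
        flip: scaleR_matrix_vector_assoc)
  then show ?thesis
    using assms by (simp add: Mz_def Mquad_eq matrix_vector_mult_diff_rdistrib inner_diff_right
        flip: scaleR_matrix_vector_assoc)
qed

lemma Qz_le_iff:
  assumes "transpose \<sigma> = \<sigma>" "-1 < \<rho>" "\<rho> < 1"
  shows "Qz (\<rho>, v, m, \<sigma>, p) \<le> c \<longleftrightarrow>
    (\<forall>x. Mquad \<rho> (x \<bullet> v) (x \<bullet> m) - x \<bullet> (\<sigma> *v x) \<le> c * (x \<bullet> x))"
  using lambda_max_le_iff[OF transpose_Mz[OF assms(1)]]
  by (simp add: Qz_def inner_Mz_matrix_vector_mult[OF assms(2,3)])

lemma Qz_less_iff:
  assumes "transpose \<sigma> = \<sigma>" "-1 < \<rho>" "\<rho> < 1"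
  shows "Qz (\<rho>, v, m, \<sigma>, p) < c \<longleftrightarrow>
    (\<forall>x. x \<noteq> 0 \<longrightarrow> Mquad \<rho> (x \<bullet> v) (x \<bullet> m) - x \<bullet> (\<sigma> *v x) < c * (x \<bullet> x))"
  using lambda_max_less_iff[OF transpose_Mz[OF assms(1)]]
  by (simp add: Qz_def inner_Mz_matrix_vector_mult[OF assms(2,3)])

lemma Tplus_iff:
  fixes z :: "'n::finite zpt" and c :: real
  assumes "z = (\<rho>, v, m, \<sigma>, p)" "-1 < \<rho>" "0 \<le> c"
  shows "Tplus z \<le> c \<longleftrightarrow> norm (m + v) \<le> sqrt (real CARD('n) * c) * (1 + \<rho>)"
    and "Tplus z < c \<longleftrightarrow> norm (m + v) < sqrt (real CARD('n) * c) * (1 + \<rho>)"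
  using square_div_le_iff[of "norm (m + v)" "CARD('n)" "1 + \<rho>" c] assms
  by (simp_all add: Tplus_def add.commute)

lemma Tminus_iff:
  fixes z :: "'n::finite zpt" and c :: real
  assumes "z = (\<rho>, v, m, \<sigma>, p)" "\<rho> < 1" "0 \<le> c"
  shows "Tminus z \<le> c \<longleftrightarrow> norm (m - v) \<le> sqrt (real CARD('n) * c) * (1 - \<rho>)"
    and "Tminus z < c \<longleftrightarrow> norm (m - v) < sqrt (real CARD('n) * c) * (1 - \<rho>)"
  using square_div_le_iff[of "norm (m - v)" "CARD('n)" "1 - \<rho>" c] assms
  by (simp_all add: Tminus_def power2_commute[of \<rho>])

lemma Uset_iff:
  fixes z :: "'n::finite zpt"
  assumes z: "z = (\<rho>, v, m, \<sigma>, p)" and "0 \<le> e 1" "0 \<le> e (-1)"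
  shows "z \<in> Uset e \<longleftrightarrow> sym_tracefree \<sigma> \<and> -1 < \<rho> \<and> \<rho> < 1 \<and>
    norm (m + v) < sqrt (real CARD('n) * e 1) * (1 + \<rho>) \<and>
    norm (m - v) < sqrt (real CARD('n) * e (-1)) * (1 - \<rho>) \<and>
    (\<forall>x. x \<noteq> 0 \<longrightarrow> Mquad \<rho> (x \<bullet> v) (x \<bullet> m) - x \<bullet> (\<sigma> *v x) < e \<rho> * (x \<bullet> x))"
proof (cases "sym_tracefree \<sigma> \<and> -1 < \<rho> \<and> \<rho> < 1")
  case True
  then show ?thesis
    using Tplus_iff(2)[OF z _ assms(2)] Tminus_iff(2)[OF z _ assms(3)]
      Qz_less_iff[OF sym_tracefree_transpose, of \<sigma> \<rho> v m p "e \<rho>"]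
    by (simp add: Uset_def Zset_def z)
qed (auto simp: Uset_def Zset_def z)

lemma U0bar_iff:
  fixes z :: "'n::finite zpt"
  assumes z: "z = (\<rho>, v, m, \<sigma>, p)" and "0 \<le> e 1" "0 \<le> e (-1)"
  shows "z \<in> U0bar e \<longleftrightarrow> sym_tracefree \<sigma> \<and> -1 < \<rho> \<and> \<rho> < 1 \<and>
    norm (m + v) \<le> sqrt (real CARD('n) * e 1) * (1 + \<rho>) \<and>
    norm (m - v) \<le> sqrt (real CARD('n) * e (-1)) * (1 - \<rho>) \<and>
    (\<forall>x. Mquad \<rho> (x \<bullet> v) (x \<bullet> m) - x \<bullet> (\<sigma> *v x) \<le> e \<rho> * (x \<bullet> x))"
proof (cases "sym_tracefree \<sigma> \<and> -1 < \<rho> \<and> \<rho> < 1")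
  case True
  then show ?thesis
    using Tplus_iff(1)[OF z _ assms(2)] Tminus_iff(1)[OF z _ assms(3)]
      Qz_le_iff[OF sym_tracefree_transpose, of \<sigma> \<rho> v m p "e \<rho>"]
    by (simp add: U0bar_def Zset_def z)
qed (auto simp: U0bar_def Zset_def z)

section \<open>The closure of U\<close>

(* The non-strict conditions of Uset_iff with the denominators cleared. The last one follows from
   the others when |\<rho>| < 1 (Mquad_ge) and is what survives at \<rho> = \<plusminus>1. *)
definition Ubar :: "(real \<Rightarrow> real) \<Rightarrow> 'n::finite zpt set" where
  "Ubar e = {(\<rho>, v, m, \<sigma>, p). sym_tracefree \<sigma> \<and> -1 \<le> \<rho> \<and> \<rho> \<le> 1 \<and>
     norm (m + v) \<le> sqrt (real CARD('n) * e 1) * (1 + \<rho>) \<and>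
     norm (m - v) \<le> sqrt (real CARD('n) * e (-1)) * (1 - \<rho>) \<and>
     (\<forall>x. (x \<bullet> v)\<^sup>2 - 2 * \<rho> * (x \<bullet> v) * (x \<bullet> m) + (x \<bullet> m)\<^sup>2 - (1 - \<rho>\<^sup>2) * (x \<bullet> (\<sigma> *v x))
        \<le> (1 - \<rho>\<^sup>2) * (e \<rho> * (x \<bullet> x))) \<and>
     (\<forall>x. (x \<bullet> m)\<^sup>2 - x \<bullet> (\<sigma> *v x) \<le> e \<rho> * (x \<bullet> x))}"

lemma closed_Ubar:
  assumes "continuous_on UNIV e"
  shows "closed (Ubar e :: 'n::finite zpt set)"
proof -
  have e: "continuous_on S (\<lambda>z. e (f z))" if "continuous_on S f" for S and f :: "'n zpt \<Rightarrow> real"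
    using continuous_on_compose2[OF assms that] by simp
  show ?thesis
    unfolding Ubar_def sym_tracefree_def case_prod_beta
    by (intro closed_Collect_conj closed_Collect_all closed_Collect_le closed_Collect_eq
        continuous_intros e)
qed

lemma Ubar_Mquad_le:
  fixes v :: "real^'n::finite"
  assumes "(\<rho>, v, m, \<sigma>, p) \<in> Ubar e"
  shows "Mquad \<rho> (x \<bullet> v) (x \<bullet> m) - x \<bullet> (\<sigma> *v x) \<le> e \<rho> * (x \<bullet> x)"
proof -
  from assms have \<rho>: "-1 \<le> \<rho>" "\<rho> \<le> 1"
    and plus: "norm (m + v) \<le> sqrt (real CARD('n) * e 1) * (1 + \<rho>)"
    and minus: "norm (m - v) \<le> sqrt (real CARD('n) * e (-1)) * (1 - \<rho>)"
    and cleared: "(x \<bullet> v)\<^sup>2 - 2 * \<rho> * (x \<bullet> v) * (x \<bullet> m) + (x \<bullet> m)\<^sup>2 - (1 - \<rho>\<^sup>2) * (x \<bullet> (\<sigma> *v x))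
        \<le> (1 - \<rho>\<^sup>2) * (e \<rho> * (x \<bullet> x))"
    and boundary: "(x \<bullet> m)\<^sup>2 - x \<bullet> (\<sigma> *v x) \<le> e \<rho> * (x \<bullet> x)"
    by (auto simp: Ubar_def)
  consider "\<rho> = 1" | "\<rho> = -1" | "-1 < \<rho>" "\<rho> < 1" using \<rho> by linarith
  then show ?thesis
  proof cases
    case 1
    then have "m = v" using minus by simp
    then show ?thesis using 1 boundary by (simp add: Mquad_one)
  next
    case 2
    then have "m = - v" using plus by (simp add: add_eq_0_iff)
    then show ?thesis using 2 boundary by (simp add: Mquad_minus_one)
  next
    case 3
    then show ?thesis using cleared by (simp add: Mquad_le_iff)
  qed
qed

lemma U0bar_subset_Ubar:
  assumes "0 \<le> e 1" "0 \<le> e (-1)"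
  shows "(U0bar e :: 'n::finite zpt set) \<subseteq> Ubar e"
proof (clarify)
  fix \<rho> v m \<sigma> p
  assume "(\<rho>, v, m, \<sigma>, p) \<in> (U0bar e :: 'n zpt set)"
  then have \<rho>: "-1 < \<rho>" "\<rho> < 1" and Q: "\<And>x. Mquad \<rho> (x \<bullet> v) (x \<bullet> m) - x \<bullet> (\<sigma> *v x) \<le> e \<rho> * (x \<bullet> x)"
    and rest: "sym_tracefree \<sigma>" "norm (m + v) \<le> sqrt (real CARD('n) * e 1) * (1 + \<rho>)"
      "norm (m - v) \<le> sqrt (real CARD('n) * e (-1)) * (1 - \<rho>)"
    by (auto simp: U0bar_iff[OF refl assms])
  have "(x \<bullet> m)\<^sup>2 - x \<bullet> (\<sigma> *v x) \<le> e \<rho> * (x \<bullet> x)" for x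
    using Q[of x] Mquad_ge[OF \<rho>, of "x \<bullet> m" "x \<bullet> v"] by simp
  with Q rest \<rho> show "(\<rho>, v, m, \<sigma>, p) \<in> Ubar e"
    by (simp add: Ubar_def Mquad_le_iff[OF \<rho>, symmetric])
qed

lemma boundary_point_in_Ubar:
  fixes v :: "real^'n::finite"
  assumes \<rho>: "\<rho> = 1 \<or> \<rho> = -1" and m: "m = \<rho> *\<^sub>R v" and \<sigma>: "sym_tracefree \<sigma>"
    and "lambda_max (outer v v - \<sigma>) \<le> e \<rho>"
  shows "(\<rho>, v, m, \<sigma>, p) \<in> Ubar e"
proof -
  have bound: "(x \<bullet> v)\<^sup>2 - x \<bullet> (\<sigma> *v x) \<le> e \<rho> * (x \<bullet> x)" for x
    using assms(4) lambda_max_outer_minus_le_iff[OF sym_tracefree_transpose[OF \<sigma>]] by blast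
  then have "norm v \<le> sqrt (real CARD('n) * e \<rho>)"
    using norm_power2_le_by_trace[OF \<sigma> bound] by (simp add: real_le_rsqrt)
  then have vv: "norm (v + v) \<le> sqrt (real CARD('n) * e \<rho>) * 2"
    using norm_triangle_ineq[of v v] by linarith
  have "norm (m + v) \<le> sqrt (real CARD('n) * e 1) * (1 + \<rho>) \<and>
      norm (m - v) \<le> sqrt (real CARD('n) * e (-1)) * (1 - \<rho>)"
  proof (cases "\<rho> = 1")
    case True
    then have "m + v = v + v" "m - v = 0" using m by simp_all
    then show ?thesis using vv True by simp
  next
    case False
    then have "\<rho> = -1" using \<rho> by simp
    then have "m - v = - (v + v)" "m + v = 0" using m by simp_all
    then have "norm (m - v) = norm (v + v)" "m + v = 0" by (simp_all only: norm_minus_cancel)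
    then show ?thesis using vv \<open>\<rho> = -1\<close> by simp
  qed
  moreover have "-1 \<le> \<rho> \<and> \<rho> \<le> 1" "\<rho>\<^sup>2 = 1" using \<rho> by auto
  moreover have "(x \<bullet> m)\<^sup>2 = (x \<bullet> v)\<^sup>2" "(x \<bullet> v)\<^sup>2 - 2 * \<rho> * (x \<bullet> v) * (x \<bullet> m) + (x \<bullet> m)\<^sup>2 = 0" for x
    using \<rho> m by (auto simp: power2_eq_square)
  ultimately show ?thesis using \<rho> \<sigma> bound by (simp add: Ubar_def)
qed

lemma Ubar_subset_Kminus'_U0bar_Kplus':
  assumes "0 \<le> e 1" "0 \<le> e (-1)"
  shows "(Ubar e :: 'n::finite zpt set) \<subseteq> Kminus' e \<union> U0bar e \<union> Kplus' e"
proof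
  fix z :: "'n zpt" assume z: "z \<in> Ubar e"
  obtain \<rho> v m \<sigma> p where z_eq: "z = (\<rho>, v, m, \<sigma>, p)" by (cases z) auto
  from z have \<sigma>: "sym_tracefree \<sigma>" and \<rho>: "-1 \<le> \<rho>" "\<rho> \<le> 1"
    and plus: "norm (m + v) \<le> sqrt (real CARD('n) * e 1) * (1 + \<rho>)"
    and minus: "norm (m - v) \<le> sqrt (real CARD('n) * e (-1)) * (1 - \<rho>)"
    and boundary: "\<forall>x. (x \<bullet> m)\<^sup>2 - x \<bullet> (\<sigma> *v x) \<le> e \<rho> * (x \<bullet> x)"
    by (auto simp: Ubar_def z_eq)
  note lambda_max_le = lambda_max_outer_minus_le_iff[OF sym_tracefree_transpose[OF \<sigma>]]
  consider "\<rho> = 1" | "\<rho> = -1" | "-1 < \<rho>" "\<rho> < 1" using \<rho> by linarith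
  then show "z \<in> Kminus' e \<union> U0bar e \<union> Kplus' e"
  proof cases
    case 1
    then have "m = v" using minus by simp
    then have "z \<in> Kplus' e" using 1 \<sigma> boundary lambda_max_le by (simp add: Kplus'_def Zset_def z_eq)
    then show ?thesis by blast
  next
    case 2
    then have "m = - v" using plus by (simp add: add_eq_0_iff)
    then have "z \<in> Kminus' e" using 2 \<sigma> boundary lambda_max_le by (simp add: Kminus'_def Zset_def z_eq)
    then show ?thesis by blast
  next
    case 3
    then have "z \<in> U0bar e"
      unfolding U0bar_iff[OF z_eq assms] using \<sigma> plus minus Ubar_Mquad_le[OF z[unfolded z_eq]] by simp
    then show ?thesis by blast
  qed
qed

lemma Ubar_eq:
  assumes "0 \<le> e 1" "0 \<le> e (-1)"
  shows "(Ubar e :: 'n::finite zpt set) = Kminus' e \<union> U0bar e \<union> Kplus' e"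
proof
  have "Kplus' e \<union> Kminus' e \<subseteq> (Ubar e :: 'n zpt set)"
    by (auto simp: Kplus'_def Kminus'_def Zset_def intro: boundary_point_in_Ubar)
  then show "Kminus' e \<union> U0bar e \<union> Kplus' e \<subseteq> (Ubar e :: 'n zpt set)"
    using U0bar_subset_Ubar[OF assms] by blast
qed (rule Ubar_subset_Kminus'_U0bar_Kplus'[OF assms])

lemma Kset_subset_Ubar: "(Kset e :: 'n::finite zpt set) \<subseteq> Ubar e"
proof
  fix z :: "'n zpt" assume "z \<in> Kset e"
  then obtain \<rho> v m \<sigma> p where z: "z = (\<rho>, v, m, \<sigma>, p)" "\<rho> = 1 \<or> \<rho> = -1" "m = \<rho> *\<^sub>R v"
    "sym_tracefree \<sigma>" "outer v v - \<sigma> = e \<rho> *\<^sub>R mat 1"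
    by (auto simp: Kset_def Zset_def)
  have "lambda_max (e \<rho> *\<^sub>R mat 1 :: real^'n^'n) \<le> e \<rho>"
    by (simp add: lambda_max_le_iff transpose_scalar flip: scaleR_matrix_vector_assoc)
  then have "lambda_max (outer v v - \<sigma>) \<le> e \<rho>" using z(5) by simp
  with z(2-4) show "z \<in> Ubar e" unfolding z(1) by (rule boundary_point_in_Ubar)
qed

lemma Uset_subset_Ubar:
  assumes "0 \<le> e 1" "0 \<le> e (-1)"
  shows "(Uset e :: 'n::finite zpt set) \<subseteq> Ubar e"
proof -
  have "Uset e \<subseteq> (U0bar e :: 'n zpt set)" by (auto simp: Uset_def U0bar_def)
  with U0bar_subset_Ubar[OF assms] show ?thesis by blast
qed

lemma Ubar_Uset_Mquad_combination:
  fixes v1 :: "real^'n::finite"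
  assumes z1: "(\<rho>1, v1, m1, \<sigma>1, p1) \<in> Ubar e" and \<rho>2: "-1 < \<rho>2" "\<rho>2 < 1"
    and Q2: "Mquad \<rho>2 (x \<bullet> v2) (x \<bullet> m2) - x \<bullet> (\<sigma>2 *v x) < e \<rho>2 * (x \<bullet> x)"
    and e: "concave_on {-1..1} e" and t: "0 < t" "t \<le> 1"
  shows "Mquad ((1 - t) * \<rho>1 + t * \<rho>2) (x \<bullet> ((1 - t) *\<^sub>R v1 + t *\<^sub>R v2)) (x \<bullet> ((1 - t) *\<^sub>R m1 + t *\<^sub>R m2))
      - x \<bullet> (((1 - t) *\<^sub>R \<sigma>1 + t *\<^sub>R \<sigma>2) *v x) < e ((1 - t) * \<rho>1 + t * \<rho>2) * (x \<bullet> x)"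
proof -
  from z1 have \<rho>1: "-1 \<le> \<rho>1" "\<rho>1 \<le> 1"
    and "norm (m1 + v1) \<le> sqrt (real CARD('n) * e 1) * (1 + \<rho>1)"
    and "norm (m1 - v1) \<le> sqrt (real CARD('n) * e (-1)) * (1 - \<rho>1)"
    by (auto simp: Ubar_def)
  then have "\<rho>1 = 1 \<Longrightarrow> x \<bullet> m1 = x \<bullet> v1" "\<rho>1 = -1 \<Longrightarrow> x \<bullet> m1 = - (x \<bullet> v1)"
    by (simp_all add: add_eq_0_iff)
  then have "Mquad ((1 - t) * \<rho>1 + t * \<rho>2) (x \<bullet> ((1 - t) *\<^sub>R v1 + t *\<^sub>R v2)) (x \<bullet> ((1 - t) *\<^sub>R m1 + t *\<^sub>R m2))
      - x \<bullet> (((1 - t) *\<^sub>R \<sigma>1 + t *\<^sub>R \<sigma>2) *v x)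
      \<le> (1 - t) * (Mquad \<rho>1 (x \<bullet> v1) (x \<bullet> m1) - x \<bullet> (\<sigma>1 *v x))
        + t * (Mquad \<rho>2 (x \<bullet> v2) (x \<bullet> m2) - x \<bullet> (\<sigma>2 *v x))"
    using Mquad_convex[OF \<rho>1 _ _ \<rho>2, of "x \<bullet> m1" "x \<bullet> v1" t "x \<bullet> v2" "x \<bullet> m2"] t
    by (simp add: inner_add_right matrix_vector_mult_add_rdistrib algebra_simps
        flip: scaleR_matrix_vector_assoc)
  also have "\<dots> < (1 - t) * (e \<rho>1 * (x \<bullet> x)) + t * (e \<rho>2 * (x \<bullet> x))"
    using Ubar_Mquad_le[OF z1] Q2 t by (rule convex_combination_le_less)
  also have "\<dots> \<le> e ((1 - t) * \<rho>1 + t * \<rho>2) * (x \<bullet> x)"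
  proof -
    have "(1 - t) * e \<rho>1 + t * e \<rho>2 \<le> e ((1 - t) * \<rho>1 + t * \<rho>2)"
      using concave_onD[OF e, of t \<rho>1 \<rho>2] \<rho>1 \<rho>2 t by simp
    from mult_right_mono[OF this, of "x \<bullet> x"] show ?thesis by (simp add: algebra_simps)
  qed
  finally show ?thesis .
qed

lemma Ubar_Uset_combination:
  fixes z1 z2 :: "'n::finite zpt"
  assumes e: "concave_on {-1..1} e" "0 \<le> e 1" "0 \<le> e (-1)"
    and z1: "z1 \<in> Ubar e" and z2: "z2 \<in> Uset e" and t: "0 < t" "t \<le> 1"
  shows "(1 - t) *\<^sub>R z1 + t *\<^sub>R z2 \<in> Uset e"
proof -
  obtain \<rho>1 v1 m1 \<sigma>1 p1 where z1_eq: "z1 = (\<rho>1, v1, m1, \<sigma>1, p1)" by (cases z1) auto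
  obtain \<rho>2 v2 m2 \<sigma>2 p2 where z2_eq: "z2 = (\<rho>2, v2, m2, \<sigma>2, p2)" by (cases z2) auto
  define \<rho> v m \<sigma> where "\<rho> = (1 - t) * \<rho>1 + t * \<rho>2" and "v = (1 - t) *\<^sub>R v1 + t *\<^sub>R v2"
    and "m = (1 - t) *\<^sub>R m1 + t *\<^sub>R m2" and "\<sigma> = (1 - t) *\<^sub>R \<sigma>1 + t *\<^sub>R \<sigma>2"
  let ?K = "\<lambda>r. sqrt (real CARD('n) * e r)"
  from z1 have \<sigma>1: "sym_tracefree \<sigma>1" and \<rho>1: "-1 \<le> \<rho>1" "\<rho>1 \<le> 1"
    and plus1: "norm (m1 + v1) \<le> ?K 1 * (1 + \<rho>1)"
    and minus1: "norm (m1 - v1) \<le> ?K (-1) * (1 - \<rho>1)"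
    by (auto simp: Ubar_def z1_eq)
  from z2 have \<sigma>2: "sym_tracefree \<sigma>2" and \<rho>2: "-1 < \<rho>2" "\<rho>2 < 1"
    and plus2: "norm (m2 + v2) < ?K 1 * (1 + \<rho>2)"
    and minus2: "norm (m2 - v2) < ?K (-1) * (1 - \<rho>2)"
    and Q2: "\<And>x. x \<noteq> 0 \<Longrightarrow> Mquad \<rho>2 (x \<bullet> v2) (x \<bullet> m2) - x \<bullet> (\<sigma>2 *v x) < e \<rho>2 * (x \<bullet> x)"
    by (auto simp: Uset_iff[OF z2_eq e(2,3)])
  have \<rho>_bounds: "-1 < \<rho>" "\<rho> < 1"
    using convex_combination_le_less[of "-1" \<rho>1 "-1" \<rho>2 t] convex_combination_le_less[of \<rho>1 1 \<rho>2 1 t]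
      \<rho>1 \<rho>2 t by (auto simp: \<rho>_def)
  have "norm (m + v) < ?K 1 * (1 + \<rho>)"
    using norm_convex_combination_less[OF plus1 plus2 t]
    by (simp add: m_def v_def \<rho>_def algebra_simps)
  moreover have "norm (m - v) < ?K (-1) * (1 - \<rho>)"
    using norm_convex_combination_less[OF minus1 minus2 t]
    by (simp add: m_def v_def \<rho>_def algebra_simps)
  moreover have "Mquad \<rho> (x \<bullet> v) (x \<bullet> m) - x \<bullet> (\<sigma> *v x) < e \<rho> * (x \<bullet> x)" if "x \<noteq> 0" for x
    unfolding \<rho>_def v_def m_def \<sigma>_def
    using Ubar_Uset_Mquad_combination[OF z1[unfolded z1_eq] \<rho>2 Q2[OF that] e(1) t] .
  moreover have "(1 - t) *\<^sub>R z1 + t *\<^sub>R z2 = (\<rho>, v, m, \<sigma>, (1 - t) * p1 + t * p2)"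
    by (simp add: z1_eq z2_eq \<rho>_def v_def m_def \<sigma>_def)
  ultimately show ?thesis
    using \<rho>_bounds sym_tracefree_combination[OF \<sigma>1 \<sigma>2]
    by (simp add: Uset_iff[OF refl e(2,3)] \<sigma>_def)
qed

lemma origin_in_Uset:
  assumes e: "concave_on {-1..1} e" "0 < e 1" "0 < e (-1)"
  shows "((0, 0, 0, 0, p) :: 'n::finite zpt) \<in> Uset e"
proof -
  have "(1 - 1/2) * e (-1) + 1/2 * e 1 \<le> e 0"
    using concave_onD[OF e(1), of "1/2" "-1" 1] by simp
  then have "0 < e 0" using e by simp
  moreover have "sym_tracefree (0 :: real^'n^'n)" by (simp add: sym_tracefree_def transpose_def vec_eq_iff)
  ultimately show ?thesis using e by (simp add: Uset_iff[OF refl] Mquad_def)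
qed

lemma Ubar_subset_closure_Uset:
  assumes e: "concave_on {-1..1} e" "0 < e 1" "0 < e (-1)"
  shows "(Ubar e :: 'n::finite zpt set) \<subseteq> closure (Uset e)"
proof
  fix z :: "'n zpt" assume z: "z \<in> Ubar e"
  define w :: "'n zpt" where "w = (0, 0, 0, 0, 0)"
  have w: "w \<in> Uset e" unfolding w_def using origin_in_Uset[OF e] .
  show "z \<in> closure (Uset e)"
  proof (cases "z = w")
    case False
    have "open_segment z w \<subseteq> Uset e"
      using Ubar_Uset_combination[OF e(1) _ _ z w] e by (auto simp: in_segment(2))
    then have "closure (open_segment z w) \<subseteq> closure (Uset e)" by (rule closure_mono)
    then show ?thesis using False by auto
  qed (use w closure_subset in blast)
qed

lemma closure_Uset:
  assumes "continuous_on UNIV e" "concave_on {-1..1} e" "0 < e 1" "0 < e (-1)"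
  shows "closure (Uset e :: 'n::finite zpt set) = Ubar e"
proof
  show "closure (Uset e) \<subseteq> (Ubar e :: 'n zpt set)"
    using Uset_subset_Ubar[OF less_imp_le less_imp_le] closed_Ubar assms
    by (intro closure_minimal) auto
  show "Ubar e \<subseteq> closure (Uset e :: 'n zpt set)"
    using Ubar_subset_closure_Uset assms by blast
qed

lemma convex_Uset:
  assumes "concave_on {-1..1} e" "0 < e 1" "0 < e (-1)"
  shows "convex (Uset e :: 'n::finite zpt set)"
  unfolding convex_alt
proof (intro ballI allI impI)
  fix z1 z2 :: "'n zpt" and t :: real
  assume "z1 \<in> Uset e" "z2 \<in> Uset e" "0 \<le> t \<and> t \<le> 1"
  moreover have "z1 \<in> Ubar e"
    using \<open>z1 \<in> Uset e\<close> Uset_subset_Ubar[OF less_imp_le less_imp_le] assms(2,3) by blast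
  ultimately show "(1 - t) *\<^sub>R z1 + t *\<^sub>R z2 \<in> Uset e"
    using Ubar_Uset_combination[OF assms(1) _ _ \<open>z1 \<in> Ubar e\<close> \<open>z2 \<in> Uset e\<close>, of t] assms
    by (cases "t = 0") auto
qed

theorem lemma3p8:
  fixes e :: "real \<Rightarrow> real"
  assumes "CARD('n::finite) \<ge> 2"
    and "\<exists>a b. \<forall>r. e r = a * r + b"
    and "e 1 > 0" and "e (-1) > 0"
  shows "convex (Uset e :: 'n zpt set)
    \<and> closure (Uset e :: 'n zpt set) = Kminus' e \<union> U0bar e \<union> Kplus' e
    \<and> (Kset e :: 'n zpt set) \<subseteq> closure (Uset e)"
proof -
  obtain \<alpha> \<beta> where e: "e = (\<lambda>r. \<alpha> * r + \<beta>)" using assms(2) by blast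
  have "continuous_on UNIV e" unfolding e by (intro continuous_intros)
  moreover have "concave_on {-1..1} e" unfolding e by (simp add: concave_on_iff algebra_simps flip: distrib_right)
  ultimately have "closure (Uset e :: 'n zpt set) = Ubar e"
    using closure_Uset assms(3,4) by blast
  then show ?thesis
    using convex_Uset[OF \<open>concave_on {-1..1} e\<close> assms(3,4)] Ubar_eq[of e] Kset_subset_Ubar[of e] assms(3,4)
    by simp
qed

end
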